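(* For every collection $\mathcal D_1$ of pairwise disjoint dyadic strips in $\mathcal D$, $\mu(\bigcup_{D\in\mathcal D_1}D)=\sum_{D\in\mathcal D_1}\mu(D)=\sum_{D\in\mathcal D_1}|\pi(D)|$. For every collection $\mathcal T_1$ of pairwise disjoint dyadic trees in $\mathcal T$, $\nu(\bigcup_{T\in\mathcal T_1}T)=\sum_{T\in\mathcal T_1}\nu(T)=\sum_{T\in\mathcal T_1}|\pi(T)|$. Moreover, for every collection $\mathcal D_1$ of pairwise disjoint strips in $\mathcal D$ and every tree $T\in\mathcal T$, $\nu(T\cap\bigcup_{D\in\mathcal D_1}D)=\sum_{D\in\mathcal D_1}\nu(T\cap D)$.
   Context: $\pi$ is the projection onto the first coordinate and $|\cdot|$ Lebesgue measure. Dyadic intervals: $I(m,l)=(2^lm,2^l(m+1)]$. Tiles: $H(m,l,n)=I(m,l)\times(2^{l-1},2^l]\times I(n,-l)$. Strips $D(m,l)=I(m,l)\times(0,2^l]\times\mathbb R$ form $\mathcal D$, with $\sigma(D(m,l))=2^l$. Trees $T(m,l,n)=\bigcup_{l'\le l}\bigcup_{m':\,I(m',l')\subseteq I(m,l)}H(m',l',N(n,l'))$, with $N(n,l')$ the integer such that $I(n,-l)\subseteq I(N(n,l'),-l')$, form $\mathcal T$, with $\tau(T(m,l,n))=2^l$. On $X=\mathbb R\times(0,\infty)\times\mathbb R$, $\mu(A)=\inf\{\sum_{S\in\mathcal S'}\sigma(S):\mathcal S'\subseteq\mathcal D,\ A\subseteq\bigcup\mathcal S'\}$ and $\nu(A)=\inf\{\sum_{S\in\mathcal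 S'}\tau(S):\mathcal S'\subseteq\mathcal T,\ A\subseteq\bigcup\mathcal S'\}$. *)

theory Defs
  imports "HOL-Analysis.Analysis"
begin

type_synonym point = "real \<times> real \<times> real"

definition Xspace :: "point set" where
  "Xspace = UNIV \<times> {0<..} \<times> UNIV"

definition dyI :: "int \<Rightarrow> int \<Rightarrow> real set" where
  "dyI m l = {2 powr (real_of_int l) * real_of_int m <.. 2 powr (real_of_int l) * (real_of_int m + 1)}"

definition tile :: "int \<Rightarrow> int \<Rightarrow> int \<Rightarrow> point set" where
  "tile m l n = dyI m l \<times> {2 powr (real_of_int l - 1) <.. 2 powr (real_of_int l)} \<times> dyI n (- l)"

definition strip :: "int \<Rightarrow> int \<Rightarrow> point set" where
  "strip m l = dyI m l \<times> {0 <.. 2 powr (real_of_int l)} \<times> UNIV"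

definition strips :: "point set set" where
  "strips = {strip m l | m l. True}"

definition sigma :: "point set \<Rightarrow> ennreal" where
  "sigma S = ennreal (2 powr (real_of_int (THE l. \<exists>m. S = strip m l)))"

definition Nidx :: "int \<Rightarrow> int \<Rightarrow> int \<Rightarrow> int" where
  "Nidx n l l' = (THE k. dyI n (- l) \<subseteq> dyI k (- l'))"

definition tree :: "int \<Rightarrow> int \<Rightarrow> int \<Rightarrow> point set" where
  "tree m l n = \<Union> {tile m' l' (Nidx n l l') | m' l'. l' \<le> l \<and> dyI m' l' \<subseteq> dyI m l}"

definition trees :: "point set set" where
  "trees = {tree m l n | m l n. True}"

definition tau :: "point set \<Rightarrow> ennreal" where
  "tau T = ennreal (2 powr (real_of_int (THE l. \<exists>m n. T = tree m l n)))"

definition mu :: "point set \<Rightarrow> ennreal" where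
  "mu A = Inf {(\<Sum>\<^sub>\<infinity>S\<in>C. sigma S) | C. C \<subseteq> strips \<and> A \<subseteq> \<Union> C}"

definition nu :: "point set \<Rightarrow> ennreal" where
  "nu A = Inf {(\<Sum>\<^sub>\<infinity>S\<in>C. tau S) | C. C \<subseteq> trees \<and> A \<subseteq> \<Union> C}"

definition proj :: "point set \<Rightarrow> real set" where
  "proj A = fst ` A"

end

theory Submission
  imports Defs
begin

text \<open>
  For the lower bound on \<open>\<mu>\<close> (resp. \<open>\<nu>\<close>) of a disjoint union, charge every member of the
  union to a covering strip (resp. tree) that contains its top point: the right endpoint of
  its interval at the maximal height \<open>2^l\<close> (and, for a tree, at the right endpoint of its
  frequency interval). A strip containing the top point of \<open>D\<close> contains \<open>D\<close>. If the top points
  of two trees lie in one tree and their intervals overlap, the tree of smaller scale meets the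
  other one in its top point. So the members charged to one cover element have pairwise
  disjoint projections inside its projection, and comparing Lebesgue measures gives
  \<open>\<Sum> \<sigma> D \<le> \<Sum> \<sigma> S\<close> (resp. with \<open>\<tau>\<close>). The intersection of a tree with a strip is empty or
  again a tree, which reduces the last claim to the second. The upper bounds are trivial: the
  members of the union cover it.
\<close>

definition dyadic_index :: "int \<Rightarrow> real \<Rightarrow> int" where
  "dyadic_index l x = \<lceil>x / 2 powr l\<rceil> - 1"

definition dyadic_right :: "int \<Rightarrow> int \<Rightarrow> real" where
  "dyadic_right m l = 2 powr l * (m + 1)"

lemma mem_dyI_iff: "x \<in> dyI m l \<longleftrightarrow> dyadic_index l x = m"
proof -
  have "x \<in> dyI m l \<longleftrightarrow> m < x / 2 powr l \<and> x / 2 powr l \<le> m + 1"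
    unfolding dyI_def by (auto simp: field_simps)
  also have "\<dots> \<longleftrightarrow> \<lceil>x / 2 powr l\<rceil> = m + 1"
    by (simp add: ceiling_eq_iff)
  finally show ?thesis unfolding dyadic_index_def by auto
qed

lemma dyadic_index_right [simp]: "dyadic_index l (dyadic_right m l) = m"
  unfolding dyadic_index_def dyadic_right_def by simp

lemma dyadic_right_mem_dyI: "dyadic_right m l \<in> dyI m l"
  by (simp add: mem_dyI_iff)

lemma ceiling_divide_int_minus_one:
  fixes y :: real and K :: int
  assumes K: "K > 0"
  shows "\<lceil>y / K\<rceil> - 1 = (\<lceil>y\<rceil> - 1) div K"
proof -
  define j where "j = \<lceil>y\<rceil> - 1"
  define q where "q = j div K"
  define r where "r = j mod K"
  have jq: "j = q * K + r" and r: "0 \<le> r" "r < K"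
    unfolding q_def r_def using K by auto
  have jy: "real_of_int j < y" "y \<le> real_of_int j + 1"
    unfolding j_def by linarith+
  have Kr: "real_of_int K > 0" using K by simp
  have "real_of_int q < y / K"
  proof -
    have "real_of_int q * K \<le> real_of_int j" using jq r by (simp add: algebra_simps)
    then have "real_of_int q * K < y" using jy by linarith
    then show ?thesis using Kr by (simp add: field_simps)
  qed
  moreover have "y / K \<le> real_of_int q + 1"
  proof -
    have "j + 1 \<le> q * K + K" using jq r by simp
    then have "real_of_int j + 1 \<le> (real_of_int q + 1) * K"
      by (metis distrib_right mult_1 of_int_add of_int_le_iff of_int_mult of_int_1)
    then have "y \<le> (real_of_int q + 1) * K" using jy by linarith
    then show ?thesis using Kr by (simp add: field_simps)
  qed
  ultimately have "\<lceil>y / K\<rceil> = q + 1"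
    by (simp add: ceiling_eq_iff)
  then show ?thesis unfolding q_def j_def by simp
qed

lemma dyadic_index_coarsen:
  assumes "l' \<le> l"
  shows "dyadic_index l x = dyadic_index l' x div 2 ^ nat (l - l')"
proof -
  have "(2::real) powr l = 2 powr (l' + real (nat (l - l')))"
    using assms by simp
  then have "(2::real) powr l = 2 powr l' * real_of_int (2 ^ nat (l - l'))"
    by (simp add: powr_add powr_realpow)
  then have "x / 2 powr l = (x / 2 powr l') / real_of_int (2 ^ nat (l - l'))"
    by simp
  then show ?thesis unfolding dyadic_index_def
    by (metis ceiling_divide_int_minus_one zero_less_numeral zero_less_power)
qed

lemma dyI_subset_coarser:
  "l' \<le> l \<Longrightarrow> dyadic_index l x = m \<Longrightarrow> dyI (dyadic_index l' x) l' \<subseteq> dyI m l"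
  by (auto simp: mem_dyI_iff dyadic_index_coarsen[of l' l])

lemma div_power2_div_power2:
  "a \<le> b \<Longrightarrow> b \<le> c \<Longrightarrow> (n::int) div 2 ^ nat (c - b) div 2 ^ nat (b - a) = n div 2 ^ nat (c - a)"
proof -
  assume "a \<le> b" "b \<le> c"
  then have "nat (c - a) = nat (c - b) + nat (b - a)" by simp
  then show ?thesis by (simp add: power_add zdiv_zmult2_eq)
qed

lemma emeasure_dyI: "emeasure lborel (dyI m l) = 2 powr l"
proof -
  have "dyI m l = {2 powr l * m <.. 2 powr l * m + 2 powr l}"
    unfolding dyI_def by (simp add: algebra_simps)
  then show ?thesis by simp
qed

lemma dyI_sets [simp]: "dyI m l \<in> sets borel"
  unfolding dyI_def by simp

lemma dyI_eq_imp_eq_scale: "dyI m l = dyI m' l' \<Longrightarrow> l = l'"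
proof -
  assume "dyI m l = dyI m' l'"
  then have "(2::real) powr l = 2 powr l'"
    using emeasure_dyI[of m l] emeasure_dyI[of m' l'] by simp
  then show "l = l'" using powr_inj[of 2 l l'] by simp
qed

lemma Nidx_eq: "l' \<le> l \<Longrightarrow> Nidx n l l' = n div 2 ^ nat (l - l')"
proof -
  assume le: "l' \<le> l"
  have "dyI n (- l) \<subseteq> dyI k (- l') \<longleftrightarrow> k = n div 2 ^ nat (l - l')" for k
  proof
    assume "dyI n (- l) \<subseteq> dyI k (- l')"
    then have "dyadic_index (- l') (dyadic_right n (- l)) = k"
      using dyadic_right_mem_dyI mem_dyI_iff by blast
    then show "k = n div 2 ^ nat (l - l')"
      using dyadic_index_coarsen[of "- l" "- l'" "dyadic_right n (- l)"] le by simp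
  qed (use dyadic_index_coarsen[of "- l" "- l'"] le in \<open>auto simp: mem_dyI_iff\<close>)
  then show ?thesis unfolding Nidx_def by simp
qed

definition scale_level :: "real \<Rightarrow> int" where
  "scale_level s = \<lceil>log 2 s\<rceil>"

lemma scale_level_le_iff: "s > 0 \<Longrightarrow> scale_level s \<le> l \<longleftrightarrow> s \<le> 2 powr l"
  unfolding scale_level_def by (simp add: ceiling_le_iff log_le_iff)

lemma scale_level_eq_iff:
  "s > 0 \<Longrightarrow> scale_level s = l \<longleftrightarrow> 2 powr (real_of_int l - 1) < s \<and> s \<le> 2 powr l"
  unfolding scale_level_def by (simp add: ceiling_eq_iff log_le_iff less_log_iff)

lemma scale_level_powr [simp]: "scale_level (2 powr l) = l"
  unfolding scale_level_def by simp

lemma mem_tile_iff: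
  "(x, s, \<xi>) \<in> tile m l n \<longleftrightarrow>
     dyadic_index l x = m \<and> s > 0 \<and> scale_level s = l \<and> dyadic_index (- l) \<xi> = n"
proof (cases "s > 0")
  case True
  then show ?thesis unfolding tile_def by (simp add: mem_dyI_iff scale_level_eq_iff)
next
  case False
  then have "\<not> 2 powr (real_of_int l - 1) < s"
    using powr_gt_zero[of 2 "real_of_int l - 1"] by linarith
  with False show ?thesis unfolding tile_def by auto
qed

lemma mem_strip_iff:
  "(x, s, \<xi>) \<in> strip m l \<longleftrightarrow> dyadic_index l x = m \<and> s > 0 \<and> scale_level s \<le> l"
  unfolding strip_def by (auto simp: mem_dyI_iff scale_level_le_iff)

lemma mem_tree_iff:
  "(x, s, \<xi>) \<in> tree m l n \<longleftrightarrow>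
     s > 0 \<and> scale_level s \<le> l \<and> dyadic_index l x = m \<and>
     dyadic_index (- scale_level s) \<xi> = n div 2 ^ nat (l - scale_level s)"
proof
  assume "(x, s, \<xi>) \<in> tree m l n"
  then obtain m' l' where ml: "l' \<le> l" "dyI m' l' \<subseteq> dyI m l"
    and tile: "(x, s, \<xi>) \<in> tile m' l' (Nidx n l l')"
    unfolding tree_def by auto
  from tile have "dyadic_index l' x = m'" "s > 0" "scale_level s = l'"
    "dyadic_index (- l') \<xi> = Nidx n l l'"
    by (auto simp: mem_tile_iff)
  moreover have "x \<in> dyI m l"
    using ml(2) \<open>dyadic_index l' x = m'\<close> by (auto simp: mem_dyI_iff)
  ultimately show "s > 0 \<and> scale_level s \<le> l \<and> dyadic_index l x = m \<and>
      dyadic_index (- scale_level s) \<xi> = n div 2 ^ nat (l - scale_level s)"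
    using ml(1) by (simp add: mem_dyI_iff Nidx_eq)
next
  assume *: "s > 0 \<and> scale_level s \<le> l \<and> dyadic_index l x = m \<and>
      dyadic_index (- scale_level s) \<xi> = n div 2 ^ nat (l - scale_level s)"
  define l' where "l' = scale_level s"
  have "dyI (dyadic_index l' x) l' \<subseteq> dyI m l"
    using * dyI_subset_coarser[of l' l x m] by (simp add: l'_def)
  moreover have "(x, s, \<xi>) \<in> tile (dyadic_index l' x) l' (Nidx n l l')"
    using * by (simp add: mem_tile_iff l'_def Nidx_eq)
  ultimately show "(x, s, \<xi>) \<in> tree m l n"
    unfolding tree_def using * l'_def by auto
qed

lemma proj_strip: "proj (strip m l) = dyI m l"
  unfolding proj_def strip_def by (simp add: fst_image_times)

lemma proj_tree: "proj (tree m l n) = dyI m l"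
proof
  show "proj (tree m l n) \<subseteq> dyI m l"
    unfolding proj_def by (auto simp: mem_tree_iff mem_dyI_iff)
  show "dyI m l \<subseteq> proj (tree m l n)"
  proof
    fix x assume "x \<in> dyI m l"
    then have "(x, 2 powr l, dyadic_right n (- l)) \<in> tree m l n"
      by (simp add: mem_tree_iff mem_dyI_iff)
    then show "x \<in> proj (tree m l n)" unfolding proj_def by force
  qed
qed

lemma sigma_strip: "sigma (strip m l) = 2 powr l"
proof -
  have "(THE l'. \<exists>m'. strip m l = strip m' l') = l"
  proof (rule the_equality)
    fix l' assume "\<exists>m'. strip m l = strip m' l'"
    then obtain m' where "proj (strip m l) = proj (strip m' l')" by metis
    then show "l' = l" by (simp add: proj_strip) (metis dyI_eq_imp_eq_scale)
  qed auto
  then show ?thesis unfolding sigma_def by simp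
qed

lemma tau_tree: "tau (tree m l n) = 2 powr l"
proof -
  have "(THE l'. \<exists>m' n'. tree m l n = tree m' l' n') = l"
  proof (rule the_equality)
    fix l' assume "\<exists>m' n'. tree m l n = tree m' l' n'"
    then obtain m' n' where "proj (tree m l n) = proj (tree m' l' n')" by metis
    then show "l' = l" by (simp add: proj_tree) (metis dyI_eq_imp_eq_scale)
  qed auto
  then show ?thesis unfolding tau_def by simp
qed

lemma sigma_eq_emeasure_proj: "D \<in> strips \<Longrightarrow> sigma D = emeasure lborel (proj D)"
  unfolding strips_def by (auto simp: sigma_strip proj_strip emeasure_dyI)

lemma tau_eq_emeasure_proj: "T \<in> trees \<Longrightarrow> tau T = emeasure lborel (proj T)"
  unfolding trees_def by (auto simp: tau_tree proj_tree emeasure_dyI)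

lemma infsum_sigma_eq_infsum_emeasure_proj:
  "P \<subseteq> strips \<Longrightarrow> (\<Sum>\<^sub>\<infinity>D\<in>P. sigma D) = (\<Sum>\<^sub>\<infinity>D\<in>P. emeasure lborel (proj D))"
  using sigma_eq_emeasure_proj by (intro infsum_cong) blast

lemma infsum_tau_eq_infsum_emeasure_proj:
  "P \<subseteq> trees \<Longrightarrow> (\<Sum>\<^sub>\<infinity>T\<in>P. tau T) = (\<Sum>\<^sub>\<infinity>T\<in>P. emeasure lborel (proj T))"
  using tau_eq_emeasure_proj by (intro infsum_cong) blast

lemma proj_strips_sets: "D \<in> strips \<Longrightarrow> proj D \<in> sets lborel"
  unfolding strips_def by (auto simp: proj_strip)

lemma proj_trees_sets: "T \<in> trees \<Longrightarrow> proj T \<in> sets lborel"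
  unfolding trees_def by (auto simp: proj_tree)

definition strip_top :: "int \<Rightarrow> int \<Rightarrow> point" where
  "strip_top m l = (dyadic_right m l, 2 powr l, 0)"

definition tree_top :: "int \<Rightarrow> int \<Rightarrow> int \<Rightarrow> point" where
  "tree_top m l n = (dyadic_right m l, 2 powr l, dyadic_right n (- l))"

lemma strip_top_mem: "strip_top m l \<in> strip m l"
  by (simp add: strip_top_def mem_strip_iff)

lemma tree_top_mem: "tree_top m l n \<in> tree m l n"
  by (simp add: tree_top_def mem_tree_iff)

lemma proj_strip_subset_if_top_mem:
  "strip_top m l \<in> strip M L \<Longrightarrow> proj (strip m l) \<subseteq> proj (strip M L)"
  unfolding proj_strip strip_top_def using dyI_subset_coarser[of l L "dyadic_right m l" M]
  by (simp add: mem_strip_iff)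

lemma proj_tree_subset_if_top_mem:
  "tree_top m l n \<in> tree M L N \<Longrightarrow> proj (tree m l n) \<subseteq> proj (tree M L N)"
  unfolding proj_tree tree_top_def using dyI_subset_coarser[of l L "dyadic_right m l" M]
  by (simp add: mem_tree_iff)

lemma disjoint_strips_disjoint_proj:
  assumes "strip m l \<inter> strip m' l' = {}"
  shows "proj (strip m l) \<inter> proj (strip m' l') = {}"
proof (rule ccontr)
  assume "proj (strip m l) \<inter> proj (strip m' l') \<noteq> {}"
  then obtain x where "x \<in> dyI m l" "x \<in> dyI m' l'" by (auto simp: proj_strip)
  then have "(x, min (2 powr l) (2 powr l'), 0) \<in> strip m l \<inter> strip m' l'"
    unfolding strip_def by auto
  then show False using assms by auto
qed

text \<open>Both frequency indices \<open>n1\<close>, \<open>n2\<close> are truncations of \<open>N\<close>, hence \<open>n1\<close> is a truncation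
  of \<open>n2\<close>.\<close>

lemma tree_top_mem_tree_of_larger_scale:
  assumes t1: "tree_top m1 l1 n1 \<in> tree M L N" and t2: "tree_top m2 l2 n2 \<in> tree M L N"
    and le: "l1 \<le> l2" and overlap: "dyI m1 l1 \<inter> dyI m2 l2 \<noteq> {}"
  shows "tree_top m1 l1 n1 \<in> tree m2 l2 n2"
proof -
  from t1 have 1: "l1 \<le> L" "n1 = N div 2 ^ nat (L - l1)"
    by (auto simp: tree_top_def mem_tree_iff)
  from t2 have 2: "l2 \<le> L" "n2 = N div 2 ^ nat (L - l2)"
    by (auto simp: tree_top_def mem_tree_iff)
  from overlap obtain y where "y \<in> dyI m1 l1" "y \<in> dyI m2 l2"
    by blast
  then have "dyadic_index l1 y = m1" "dyadic_index l2 y = m2"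
    by (simp_all add: mem_dyI_iff)
  then have "dyadic_index l2 (dyadic_right m1 l1) = m2"
    using dyadic_index_coarsen[OF le, of "dyadic_right m1 l1"] dyadic_index_coarsen[OF le, of y]
    by simp
  moreover have "n2 div 2 ^ nat (l2 - l1) = n1"
    using 1 2 le div_power2_div_power2[of l1 l2 L N] by simp
  ultimately show ?thesis using le by (simp add: tree_top_def mem_tree_iff)
qed

lemma disjoint_trees_with_tops_in_common_tree:
  assumes "tree_top m1 l1 n1 \<in> tree M L N" "tree_top m2 l2 n2 \<in> tree M L N"
    and disj: "tree m1 l1 n1 \<inter> tree m2 l2 n2 = {}"
  shows "dyI m1 l1 \<inter> dyI m2 l2 = {}"
proof (rule ccontr)
  assume overlap: "dyI m1 l1 \<inter> dyI m2 l2 \<noteq> {}"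
  show False
  proof (cases "l1 \<le> l2")
    case True
    have "tree_top m1 l1 n1 \<in> tree m2 l2 n2"
      by (rule tree_top_mem_tree_of_larger_scale[OF assms(1,2) True overlap])
    then show False using disj tree_top_mem by blast
  next
    case False
    then have le: "l2 \<le> l1" by simp
    have "dyI m2 l2 \<inter> dyI m1 l1 \<noteq> {}" using overlap by blast
    then have "tree_top m2 l2 n2 \<in> tree m1 l1 n1"
      by (rule tree_top_mem_tree_of_larger_scale[OF assms(2,1) le])
    then show False using disj tree_top_mem by blast
  qed
qed

lemma tree_inter_strip_empty_or_tree:
  "tree m l n \<inter> strip M L = {} \<or> tree m l n \<inter> strip M L \<in> trees"
proof (cases "l \<le> L")
  case le: True
  show ?thesis
  proof (cases "M = m div 2 ^ nat (L - l)")
    case True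
    then have "tree m l n \<subseteq> strip M L"
      using le dyadic_index_coarsen[OF le] by (auto simp: mem_tree_iff mem_strip_iff)
    then show ?thesis unfolding trees_def by (auto simp: Int_absorb2)
  next
    case False
    then have "tree m l n \<inter> strip M L = {}"
      using le dyadic_index_coarsen[OF le] by (auto simp: mem_tree_iff mem_strip_iff)
    then show ?thesis by blast
  qed
next
  case False
  then have le: "L \<le> l" by simp
  show ?thesis
  proof (cases "M div 2 ^ nat (l - L) = m")
    case True
    have "tree m l n \<inter> strip M L = tree M L (n div 2 ^ nat (l - L))"
    proof (rule set_eqI)
      fix p :: point
      obtain x s \<xi> where p: "p = (x, s, \<xi>)" by (cases p)
      show "p \<in> tree m l n \<inter> strip M L \<longleftrightarrow> p \<in> tree M L (n div 2 ^ nat (l - L))"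
        using le True dyadic_index_coarsen[OF le, of x] div_power2_div_power2[of "scale_level s" L l n]
        by (auto simp: mem_tree_iff mem_strip_iff p)
    qed
    then show ?thesis unfolding trees_def by auto
  next
    case False
    then have "tree m l n \<inter> strip M L = {}"
      using le dyadic_index_coarsen[OF le] by (auto simp: mem_tree_iff mem_strip_iff)
    then show ?thesis by blast
  qed
qed

lemma infsum_emeasure_le_by_assignment:
  fixes f :: "'a \<Rightarrow> 'b set" and g :: "'c \<Rightarrow> 'b set" and a :: "'a \<Rightarrow> 'c"
  assumes a: "\<And>D. D \<in> P \<Longrightarrow> a D \<in> C"
    and sub: "\<And>D. D \<in> P \<Longrightarrow> f D \<subseteq> g (a D)"
    and disj: "\<And>D D'. D \<in> P \<Longrightarrow> D' \<in> P \<Longrightarrow> D \<noteq> D' \<Longrightarrow> a D = a D' \<Longrightarrow> f D \<inter> f D' = {}"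
    and f: "\<And>D. D \<in> P \<Longrightarrow> f D \<in> sets M" and g: "\<And>S. S \<in> C \<Longrightarrow> g S \<in> sets M"
  shows "(\<Sum>\<^sub>\<infinity>D\<in>P. emeasure M (f D)) \<le> (\<Sum>\<^sub>\<infinity>S\<in>C. emeasure M (g S))"
proof (rule infsum_le_finite_sums)
  show "(\<lambda>D. emeasure M (f D)) summable_on P" by (rule nonneg_summable_on_complete) simp
  fix F assume F: "finite F" "F \<subseteq> P"
  have "(\<Sum>D\<in>F. emeasure M (f D)) = (\<Sum>S\<in>a ` F. \<Sum>D\<in>{D\<in>F. a D = S}. emeasure M (f D))"
    by (rule sum.image_gen[OF F(1)])
  also have "\<dots> \<le> (\<Sum>S\<in>a ` F. emeasure M (g S))"
  proof (rule sum_mono)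
    fix S assume S: "S \<in> a ` F"
    let ?G = "{D\<in>F. a D = S}"
    have "disjoint_family_on f ?G"
      using F disj unfolding disjoint_family_on_def by blast
    then have "(\<Sum>D\<in>?G. emeasure M (f D)) = emeasure M (\<Union>D\<in>?G. f D)"
      using F f by (intro sum_emeasure) auto
    also have "\<dots> \<le> emeasure M (g S)"
    proof (rule emeasure_mono)
      show "(\<Union>D\<in>?G. f D) \<subseteq> g S" using F sub by fastforce
      show "g S \<in> sets M" using F S a g by blast
    qed
    finally show "(\<Sum>D\<in>?G. emeasure M (f D)) \<le> emeasure M (g S)" .
  qed
  also have "\<dots> = (\<Sum>\<^sub>\<infinity>S\<in>a ` F. emeasure M (g S))"
    using F by simp
  also have "\<dots> \<le> (\<Sum>\<^sub>\<infinity>S\<in>C. emeasure M (g S))"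
    by (rule infsum_mono_neutral) (use F a in \<open>auto intro: nonneg_summable_on_complete\<close>)
  finally show "(\<Sum>D\<in>F. emeasure M (f D)) \<le> (\<Sum>\<^sub>\<infinity>S\<in>C. emeasure M (g S))" .
qed

lemma infsum_sigma_le_cover:
  assumes P: "P \<subseteq> strips" "disjoint P" and C: "C \<subseteq> strips" "\<Union>P \<subseteq> \<Union>C"
  shows "(\<Sum>\<^sub>\<infinity>D\<in>P. sigma D) \<le> (\<Sum>\<^sub>\<infinity>S\<in>C. sigma S)"
proof -
  have "\<exists>S\<in>C. proj D \<subseteq> proj S" if "D \<in> P" for D
  proof -
    obtain m l where D: "D = strip m l" using \<open>D \<in> P\<close> P unfolding strips_def by auto
    then obtain S where "S \<in> C" "strip_top m l \<in> S" using strip_top_mem \<open>D \<in> P\<close> C by blast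
    moreover obtain M L where "S = strip M L" using \<open>S \<in> C\<close> C unfolding strips_def by auto
    ultimately show ?thesis using D proj_strip_subset_if_top_mem by blast
  qed
  then obtain a where a_mem: "\<And>D. D \<in> P \<Longrightarrow> a D \<in> C"
    and a_proj: "\<And>D. D \<in> P \<Longrightarrow> proj D \<subseteq> proj (a D)"
    by metis
  have "(\<Sum>\<^sub>\<infinity>D\<in>P. emeasure lborel (proj D)) \<le> (\<Sum>\<^sub>\<infinity>S\<in>C. emeasure lborel (proj S))"
  proof (rule infsum_emeasure_le_by_assignment[where a = a and f = proj and g = proj, OF a_mem a_proj])
    show "proj D \<inter> proj D' = {}" if D: "D \<in> P" "D' \<in> P" "D \<noteq> D'" for D D'
    proof -
      obtain m l m' l' where "D = strip m l" "D' = strip m' l'"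
        using D P unfolding strips_def by blast
      moreover have "D \<inter> D' = {}" using P(2) D unfolding disjoint_def by blast
      ultimately show ?thesis using disjoint_strips_disjoint_proj by simp
    qed
  qed (use P C proj_strips_sets in blast)+
  then show ?thesis
    using P C by (simp add: infsum_sigma_eq_infsum_emeasure_proj)
qed

lemma infsum_tau_le_cover:
  assumes P: "P \<subseteq> trees" "disjoint P" and C: "C \<subseteq> trees" "\<Union>P \<subseteq> \<Union>C"
  shows "(\<Sum>\<^sub>\<infinity>D\<in>P. tau D) \<le> (\<Sum>\<^sub>\<infinity>S\<in>C. tau S)"
proof -
  have "\<exists>S\<in>C. \<exists>m l n. D = tree m l n \<and> tree_top m l n \<in> S" if "D \<in> P" for D
  proof -
    obtain m l n where "D = tree m l n" using \<open>D \<in> P\<close> P unfolding trees_def by auto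
    then show ?thesis using tree_top_mem \<open>D \<in> P\<close> C by blast
  qed
  then obtain a where a_mem: "\<And>D. D \<in> P \<Longrightarrow> a D \<in> C"
    and a_top: "\<And>D. D \<in> P \<Longrightarrow> \<exists>m l n. D = tree m l n \<and> tree_top m l n \<in> a D"
    by metis
  have a_tree: "\<exists>M L N. a D = tree M L N" if "D \<in> P" for D
    using a_mem[OF that] C unfolding trees_def by blast
  have "(\<Sum>\<^sub>\<infinity>D\<in>P. emeasure lborel (proj D)) \<le> (\<Sum>\<^sub>\<infinity>S\<in>C. emeasure lborel (proj S))"
  proof (rule infsum_emeasure_le_by_assignment[where a = a and f = proj and g = proj, OF a_mem])
    show "proj D \<subseteq> proj (a D)" if "D \<in> P" for D
      using a_top[OF that] a_tree[OF that] proj_tree_subset_if_top_mem by metis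
    show "proj D \<inter> proj D' = {}"
      if D: "D \<in> P" "D' \<in> P" "D \<noteq> D'" "a D = a D'" for D D'
    proof -
      obtain m1 l1 n1 m2 l2 n2 where D_tree: "D = tree m1 l1 n1" "D' = tree m2 l2 n2"
        and tops: "tree_top m1 l1 n1 \<in> a D" "tree_top m2 l2 n2 \<in> a D"
        using a_top D by metis
      obtain M L N where "a D = tree M L N" using a_tree[OF D(1)] by blast
      with tops have "tree_top m1 l1 n1 \<in> tree M L N" "tree_top m2 l2 n2 \<in> tree M L N"
        by simp_all
      moreover have "tree m1 l1 n1 \<inter> tree m2 l2 n2 = {}"
        using P(2) D D_tree unfolding disjoint_def by blast
      ultimately have "dyI m1 l1 \<inter> dyI m2 l2 = {}"
        by (rule disjoint_trees_with_tops_in_common_tree)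
      then show ?thesis by (simp add: D_tree proj_tree)
    qed
  qed (use P C proj_trees_sets in blast)+
  then show ?thesis
    using P C by (simp add: infsum_tau_eq_infsum_emeasure_proj)
qed

lemma mu_Union_disjoint_strips:
  assumes "D1 \<subseteq> strips" "disjoint D1"
  shows "mu (\<Union>D1) = (\<Sum>\<^sub>\<infinity>D\<in>D1. emeasure lborel (proj D))"
proof -
  have "mu (\<Union>D1) = (\<Sum>\<^sub>\<infinity>D\<in>D1. sigma D)"
    unfolding mu_def
    by (rule antisym, rule Inf_lower) (use assms infsum_sigma_le_cover in \<open>auto intro!: Inf_greatest\<close>)
  then show ?thesis using assms(1) by (simp add: infsum_sigma_eq_infsum_emeasure_proj)
qed

lemma nu_Union_disjoint_trees:
  assumes "T1 \<subseteq> trees" "disjoint T1"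
  shows "nu (\<Union>T1) = (\<Sum>\<^sub>\<infinity>T\<in>T1. emeasure lborel (proj T))"
proof -
  have "nu (\<Union>T1) = (\<Sum>\<^sub>\<infinity>T\<in>T1. tau T)"
    unfolding nu_def
    by (rule antisym, rule Inf_lower) (use assms infsum_tau_le_cover in \<open>auto intro!: Inf_greatest\<close>)
  then show ?thesis using assms(1) by (simp add: infsum_tau_eq_infsum_emeasure_proj)
qed

lemma mu_strip: "D \<in> strips \<Longrightarrow> mu D = emeasure lborel (proj D)"
  using mu_Union_disjoint_strips[of "{D}"] by (simp add: disjoint_def)

lemma nu_tree: "T \<in> trees \<Longrightarrow> nu T = emeasure lborel (proj T)"
  using nu_Union_disjoint_trees[of "{T}"] by (simp add: disjoint_def)

lemma infsum_mu_strips: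
  "D1 \<subseteq> strips \<Longrightarrow> (\<Sum>\<^sub>\<infinity>D\<in>D1. mu D) = (\<Sum>\<^sub>\<infinity>D\<in>D1. emeasure lborel (proj D))"
  using mu_strip by (intro infsum_cong) blast

lemma infsum_nu_trees:
  "T1 \<subseteq> trees \<Longrightarrow> (\<Sum>\<^sub>\<infinity>T\<in>T1. nu T) = (\<Sum>\<^sub>\<infinity>T\<in>T1. emeasure lborel (proj T))"
  using nu_tree by (intro infsum_cong) blast

lemma nu_empty: "nu {} = 0"
  using nu_Union_disjoint_trees[of "{}"] by simp

lemma nu_tree_inter_Union_strips:
  assumes D1: "D1 \<subseteq> strips" "disjoint D1" and T: "T \<in> trees"
  shows "nu (T \<inter> \<Union>D1) = (\<Sum>\<^sub>\<infinity>D\<in>D1. nu (T \<inter> D))"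
proof -
  define J where "J = {D\<in>D1. T \<inter> D \<noteq> {}}"
  have pieces: "(\<lambda>D. T \<inter> D) ` J \<subseteq> trees"
  proof
    fix X assume "X \<in> (\<lambda>D. T \<inter> D) ` J"
    then obtain D where D: "D \<in> D1" "T \<inter> D \<noteq> {}" "X = T \<inter> D"
      unfolding J_def by blast
    obtain m l n where "T = tree m l n" using T unfolding trees_def by blast
    moreover obtain M L where "D = strip M L" using D(1) D1(1) unfolding strips_def by blast
    ultimately show "X \<in> trees" using D tree_inter_strip_empty_or_tree by metis
  qed
  have disj: "D \<inter> D' = {}" if "D \<in> D1" "D' \<in> D1" "D \<noteq> D'" for D D'
    using D1(2) that unfolding disjoint_def by blast
  then have inj: "inj_on (\<lambda>D. T \<inter> D) J"
    unfolding J_def by (intro inj_onI) blast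
  have "disjoint ((\<lambda>D. T \<inter> D) ` J)"
    using disj unfolding disjoint_def J_def by blast
  moreover have "\<Union>((\<lambda>D. T \<inter> D) ` J) = T \<inter> \<Union>D1"
    unfolding J_def by blast
  ultimately have "nu (T \<inter> \<Union>D1) = (\<Sum>\<^sub>\<infinity>X\<in>(\<lambda>D. T \<inter> D) ` J. nu X)"
    using nu_Union_disjoint_trees[OF pieces] infsum_nu_trees[OF pieces] by simp
  also have "\<dots> = (\<Sum>\<^sub>\<infinity>D\<in>J. nu (T \<inter> D))"
    using infsum_reindex[OF inj] by (simp add: comp_def)
  also have "\<dots> = (\<Sum>\<^sub>\<infinity>D\<in>D1. nu (T \<inter> D))"
    by (rule infsum_cong_neutral) (auto simp: J_def nu_empty)
  finally show ?thesis .
qed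

theorem lemma4p4:
  shows "(\<forall>D1. D1 \<subseteq> strips \<and> disjoint D1 \<longrightarrow>
            mu (\<Union> D1) = (\<Sum>\<^sub>\<infinity>D\<in>D1. mu D) \<and>
            (\<Sum>\<^sub>\<infinity>D\<in>D1. mu D) = (\<Sum>\<^sub>\<infinity>D\<in>D1. emeasure lborel (proj D)))
       \<and> (\<forall>T1. T1 \<subseteq> trees \<and> disjoint T1 \<longrightarrow>
            nu (\<Union> T1) = (\<Sum>\<^sub>\<infinity>T\<in>T1. nu T) \<and>
            (\<Sum>\<^sub>\<infinity>T\<in>T1. nu T) = (\<Sum>\<^sub>\<infinity>T\<in>T1. emeasure lborel (proj T)))
       \<and> (\<forall>D1 T. D1 \<subseteq> strips \<and> disjoint D1 \<and> T \<in> trees \<longrightarrow>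
            nu (T \<inter> \<Union> D1) = (\<Sum>\<^sub>\<infinity>D\<in>D1. nu (T \<inter> D)))"
proof (intro conjI allI impI)
  fix D1 assume "D1 \<subseteq> strips \<and> disjoint D1"
  then show "mu (\<Union> D1) = (\<Sum>\<^sub>\<infinity>D\<in>D1. mu D)"
    and "(\<Sum>\<^sub>\<infinity>D\<in>D1. mu D) = (\<Sum>\<^sub>\<infinity>D\<in>D1. emeasure lborel (proj D))"
    by (simp_all add: mu_Union_disjoint_strips infsum_mu_strips)
next
  fix T1 assume "T1 \<subseteq> trees \<and> disjoint T1"
  then show "nu (\<Union> T1) = (\<Sum>\<^sub>\<infinity>T\<in>T1. nu T)"
    and "(\<Sum>\<^sub>\<infinity>T\<in>T1. nu T) = (\<Sum>\<^sub>\<infinity>T\<in>T1. emeasure lborel (proj T))"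
    by (simp_all add: nu_Union_disjoint_trees infsum_nu_trees)
next
  fix D1 T assume "D1 \<subseteq> strips \<and> disjoint D1 \<and> T \<in> trees"
  then show "nu (T \<inter> \<Union> D1) = (\<Sum>\<^sub>\<infinity>D\<in>D1. nu (T \<inter> D))"
    using nu_tree_inter_Union_strips by blast
qed

end
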